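(* Let $p\in\{1,2,3\}$, $N,k$ integers with $2k+1\le N$, $\Gamma=[N]^p$, $\Lambda=[2k+1]^p$, and for $i\in\Gamma$ let $\Lambda_i=\{i+j:j\in\{-k,\dots,k\}^p\}$. For each $r=1,\dots,t$ let $(Z^r_i)_{i\in\Gamma}$ have i.i.d. $\mathcal{N}(0,1)$ entries; for all $r,s\in\{1,\dots,t\}$ and $i\ne j$, $Z^r_i$ is independent of $Z^s_j$; and for each $i\in\Gamma$, $(Z^1_i,\dots,Z^t_i)$ is jointly Gaussian with covariance matrix $\Sigma\in\mathbb{R}^{t\times t}$. For $i\in\Gamma$ define $Y_i:=(Z^1_{\Lambda_i\cap\Gamma},\dots,Z^t_{\Lambda_i\cap\Gamma})$, and let $f_i:\mathbb{R}^{|\Lambda_i\cap\Gamma|t}\to\mathbb{R}$ be order-2 pseudo-Lipschitz for all $i\in\Gamma$. Then for all $\epsilon\in(0,1)$ there exist $K,\kappa>0$ such that $$P\Big(\Big|\frac{1}{|\Gamma|}\sum_{i\in\Gamma}\big(f_i(Y_i)-\mathbb{E}[f_i(Y_i)]\big)\Big|\ge\epsilon\Big)\le Ke^{-\kappa|\Gamma|\epsilon^2}.$$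
   Context: $[m]=\{1,\dots,m\}$. For an array $Z=(Z_i)_{i\in\Gamma}$ and $S\subset\Gamma$, $Z_S=(Z_i)_{i\in S}$. A function $g$ is order-2 pseudo-Lipschitz with constant $L$ if $|g(x)-g(y)|\le L(1+\|x\|+\|y\|)\|x-y\|$ for all $x,y$. *)

theory Defs
  imports "HOL-Probability.Probability"
begin

definition grid :: "nat \<Rightarrow> nat \<Rightarrow> int list set" where
  "grid p N = {i. length i = p \<and> (\<forall>x\<in>set i. 1 \<le> x \<and> x \<le> int N)}"

definition window :: "nat \<Rightarrow> nat \<Rightarrow> nat \<Rightarrow> int list \<Rightarrow> int list set" where
  "window p N k i = {j \<in> grid p N. \<forall>d<p. \<bar>j ! d - i ! d\<bar> \<le> int k}"

definition norm_on :: "'b set \<Rightarrow> ('b \<Rightarrow> real) \<Rightarrow> real" where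
  "norm_on S x = sqrt (\<Sum>a\<in>S. (x a)\<^sup>2)"

text \<open>f is a function of the coordinates in S (i.e. on R^S), order-2 pseudo-Lipschitz with constant L.\<close>
definition pseudo_lipschitz2_on :: "'b set \<Rightarrow> real \<Rightarrow> (('b \<Rightarrow> real) \<Rightarrow> real) \<Rightarrow> bool" where
  "pseudo_lipschitz2_on S L f \<longleftrightarrow>
     (\<forall>x y. \<bar>f x - f y\<bar> \<le> L * (1 + norm_on S x + norm_on S y) * norm_on S (\<lambda>a. x a - y a))"

definition gaussian_rv :: "'a measure \<Rightarrow> ('a \<Rightarrow> real) \<Rightarrow> real \<Rightarrow> real \<Rightarrow> bool" where
  "gaussian_rv M X m v \<longleftrightarrow> X \<in> borel_measurable M \<and>
     (if v = 0 then (AE \<omega> in M. X \<omega> = m) else distributed M lborel X (normal_density m (sqrt v)))"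

text \<open>Z r i \<omega> = Z^r_i(\<omega>) for r in 1..t, i in Gamma: each entry N(0,1); for each site i
  the vector (Z^1_i,...,Z^t_i) is jointly Gaussian with mean 0 and covariance Sigma
  (every linear combination is Gaussian with variance c^T Sigma c); the site vectors
  are mutually independent over i in Gamma.\<close>
definition gaussian_field ::
  "nat \<Rightarrow> nat \<Rightarrow> nat \<Rightarrow> (nat \<Rightarrow> nat \<Rightarrow> real) \<Rightarrow> 'a measure \<Rightarrow> (nat \<Rightarrow> int list \<Rightarrow> 'a \<Rightarrow> real) \<Rightarrow> bool" where
  "gaussian_field p N t \<Sigma> M Z \<longleftrightarrow>
     (\<forall>r s. \<Sigma> r s = \<Sigma> s r) \<and>
     (\<forall>r\<in>{1..t}. \<forall>i\<in>grid p N. Z r i \<in> borel_measurable M \<and>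
          distributed M lborel (Z r i) (normal_density 0 1)) \<and>
     (\<forall>i\<in>grid p N. \<forall>c::nat \<Rightarrow> real.
          gaussian_rv M (\<lambda>\<omega>. \<Sum>r=1..t. c r * Z r i \<omega>) 0 (\<Sum>r=1..t. \<Sum>s=1..t. c r * c s * \<Sigma> r s)) \<and>
     prob_space.indep_vars M (\<lambda>_. PiM {1..t} (\<lambda>_. borel)) (\<lambda>i \<omega>. \<lambda>r\<in>{1..t}. Z r i \<omega>) (grid p N)"

text \<open>Y_i = (Z^1_{Lambda_i \<inter> Gamma}, ..., Z^t_{Lambda_i \<inter> Gamma}), as a vector indexed by
  (Lambda_i \<inter> Gamma) \<times> {1..t} (extended by 0 outside).\<close>
definition obs :: "nat \<Rightarrow> nat \<Rightarrow> nat \<Rightarrow> nat \<Rightarrow> (nat \<Rightarrow> int list \<Rightarrow> 'a \<Rightarrow> real) \<Rightarrow> int list \<Rightarrow> 'a \<Rightarrow> (int list \<times> nat \<Rightarrow> real)" where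
  "obs p N k t Z i \<omega> = (\<lambda>(j, r). if j \<in> window p N k i \<and> r \<in> {1..t} then Z r j \<omega> else 0)"

end

theory Submission
  imports Defs
begin

text \<open>Colour each site by the residues of its coordinates modulo \<open>2k+1\<close>. Windows of distinct
  sites of the same colour are disjoint, so within a colour class the summands are independent,
  and there are at most \<open>(2k+1)^p\<close> classes. Each centred summand has a sub-Gaussian moment
  generating function near \<open>0\<close>: pseudo-Lipschitz growth gives
  \<open>|f\<^sub>i(Y\<^sub>i) - f\<^sub>i(0)| \<le> L + 2L|Y\<^sub>i|\<^sup>2\<close>, and \<open>exp(s|Y\<^sub>i|\<^sup>2)\<close> is integrable for small \<open>s\<close>
  using only the \<open>N(0,1)\<close> marginals. A Chernoff bound for every colour class and sign, followed by
  a union bound, yields the exponential tail.\<close>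

section \<open>Exponential inequalities and Gaussian moments\<close>

lemma exp_le_quadratic_bound:
  fixes x l \<nu> :: real
  assumes "\<nu> > 0" "\<bar>l\<bar> \<le> \<nu>"
  shows "exp (l * x) \<le> 1 + l * x + l\<^sup>2 * (exp (2 * \<nu> * \<bar>x\<bar>) / \<nu>\<^sup>2)"
proof -
  obtain u where u: "\<bar>u\<bar> \<le> \<bar>l * x\<bar>"
    "exp (l * x) = (\<Sum>m<2. (l * x) ^ m / fact m) + exp u / fact 2 * (l * x) ^ 2"
    using Maclaurin_exp_le[of "l * x" 2] by blast
  have Taylor: "exp (l * x) = 1 + l * x + l\<^sup>2 * (exp u / 2 * x\<^sup>2)"
    using u(2) by (simp add: numeral_2_eq_2 power_mult_distrib)
  have "u \<le> \<nu> * \<bar>x\<bar>"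
    using u(1) mult_right_mono[OF assms(2) abs_ge_zero[of x]] by (simp add: abs_mult)
  then have "exp u \<le> exp (\<nu> * \<bar>x\<bar>)" by simp
  moreover have "x\<^sup>2 \<le> 2 * exp (\<nu> * \<bar>x\<bar>) / \<nu>\<^sup>2"
  proof -
    have "(\<nu> * \<bar>x\<bar>)\<^sup>2 / 2 \<le> exp (\<nu> * \<bar>x\<bar>)"
      using exp_lower_Taylor_quadratic[of "\<nu> * \<bar>x\<bar>"] assms(1)
        mult_nonneg_nonneg[of \<nu> "\<bar>x\<bar>"] by linarith
    then show ?thesis using assms by (simp add: power_mult_distrib field_simps)
  qed
  ultimately have "exp u / 2 * x\<^sup>2 \<le> exp (\<nu> * \<bar>x\<bar>) / 2 * (2 * exp (\<nu> * \<bar>x\<bar>) / \<nu>\<^sup>2)"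
    by (intro mult_mono divide_right_mono) auto
  also have "\<dots> = exp (2 * \<nu> * \<bar>x\<bar>) / \<nu>\<^sup>2"
    by (simp add: exp_add[symmetric])
  finally have "l\<^sup>2 * (exp u / 2 * x\<^sup>2) \<le> l\<^sup>2 * (exp (2 * \<nu> * \<bar>x\<bar>) / \<nu>\<^sup>2)"
    by (rule mult_left_mono) simp
  with Taylor show ?thesis by linarith
qed

lemma exp_scaled_sum_le_sum_exp:
  fixes y :: "'b \<Rightarrow> real" and s :: real
  assumes "finite S" "S \<noteq> {}" "\<And>a. a \<in> S \<Longrightarrow> y a \<ge> 0" "s \<ge> 0" "s * card S \<le> 1/4"
  shows "exp (s * (\<Sum>a\<in>S. y a)) \<le> (\<Sum>a\<in>S. exp (y a / 4))"
proof -
  have "Max (y ` S) \<in> y ` S"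
    by (rule Max_in) (use assms(1,2) in auto)
  then obtain a0 where "a0 \<in> S" "y a0 = Max (y ` S)"
    by (metis imageE)
  then have a0: "a0 \<in> S" "\<And>a. a \<in> S \<Longrightarrow> y a \<le> y a0"
    using assms(1) by auto
  have "s * (\<Sum>a\<in>S. y a) \<le> s * (card S * y a0)"
    using sum_mono[of S y "\<lambda>_. y a0", OF a0(2)] assms(4) by (simp add: mult_left_mono)
  also have "\<dots> \<le> y a0 / 4"
    using mult_right_mono[OF assms(5) assms(3)[OF a0(1)]] by simp
  finally have "exp (s * (\<Sum>a\<in>S. y a)) \<le> exp (y a0 / 4)" by simp
  also have "\<dots> \<le> (\<Sum>a\<in>S. exp (y a / 4))"
    by (rule member_le_sum) (use a0 assms in auto)
  finally show ?thesis .
qed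

lemma normal_density_mult_exp_sq_div_4:
  "normal_density 0 1 x * exp (x\<^sup>2 / 4) = sqrt 2 * normal_density 0 (sqrt 2) x"
proof -
  have "exp (- x\<^sup>2 / 2) * exp (x\<^sup>2 / 4) = exp (- x\<^sup>2 / 4)"
    by (simp add: exp_add[symmetric])
  moreover have "sqrt (pi * 4) = sqrt 2 * sqrt (pi * 2)"
    by (simp add: real_sqrt_mult[symmetric] mult_ac)
  ultimately show ?thesis
    unfolding normal_density_def by (simp add: field_simps)
qed

lemma nn_integral_exp_sq_div_4_std_normal:
  assumes "distributed M lborel Z (normal_density 0 1)"
  shows "(\<integral>\<^sup>+\<omega>. exp ((Z \<omega>)\<^sup>2 / 4) \<partial>M) = sqrt 2"
proof -
  have "(\<integral>\<^sup>+\<omega>. exp ((Z \<omega>)\<^sup>2 / 4) \<partial>M)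
      = (\<integral>\<^sup>+x. ennreal (normal_density 0 1 x) * ennreal (exp (x\<^sup>2 / 4)) \<partial>lborel)"
    using distributed_nn_integral[OF assms, of "\<lambda>x. ennreal (exp (x\<^sup>2 / 4))"] by simp
  also have "\<dots> = (\<integral>\<^sup>+x. ennreal (sqrt 2) * normal_density 0 (sqrt 2) x \<partial>lborel)"
    by (intro nn_integral_cong) (simp add: ennreal_mult[symmetric] normal_density_mult_exp_sq_div_4)
  also have "\<dots> = ennreal (sqrt 2) * (\<integral>\<^sup>+x. normal_density 0 (sqrt 2) x \<partial>lborel)"
    by (simp add: nn_integral_cmult)
  also have "(\<integral>\<^sup>+x. normal_density 0 (sqrt 2) x \<partial>lborel) = 1"
    by (subst nn_integral_eq_integral) auto
  finally show ?thesis by simp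
qed

text \<open>No joint distribution of the family is needed: since \<open>s |S| \<le> 1/4\<close>, the integrand is
  pointwise at most \<open>\<Sum>a\<in>S. exp (Z a\<^sup>2 / 4)\<close>.\<close>
lemma nn_integral_exp_sum_sq_std_normal_le:
  fixes Z :: "'b \<Rightarrow> 'a \<Rightarrow> real" and s :: real
  assumes "finite S" "S \<noteq> {}" "s \<ge> 0" "s * card S \<le> 1/4"
    and "\<And>a. a \<in> S \<Longrightarrow> Z a \<in> borel_measurable M"
    and "\<And>a. a \<in> S \<Longrightarrow> distributed M lborel (Z a) (normal_density 0 1)"
  shows "(\<integral>\<^sup>+\<omega>. exp (s * (\<Sum>a\<in>S. (Z a \<omega>)\<^sup>2)) \<partial>M) \<le> card S * sqrt 2"
proof -
  have "(\<integral>\<^sup>+\<omega>. exp (s * (\<Sum>a\<in>S. (Z a \<omega>)\<^sup>2)) \<partial>M)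
     \<le> (\<integral>\<^sup>+\<omega>. (\<Sum>a\<in>S. ennreal (exp ((Z a \<omega>)\<^sup>2 / 4))) \<partial>M)"
    by (intro nn_integral_mono)
       (auto simp: sum_ennreal intro!: ennreal_leI exp_scaled_sum_le_sum_exp[OF assms(1,2) _ assms(3,4)])
  also have "\<dots> = (\<Sum>a\<in>S. (\<integral>\<^sup>+\<omega>. exp ((Z a \<omega>)\<^sup>2 / 4) \<partial>M))"
    by (intro nn_integral_sum) (use assms(5) in auto)
  also have "\<dots> = (\<Sum>a\<in>S. ennreal (sqrt 2))"
    by (intro sum.cong refl nn_integral_exp_sq_div_4_std_normal assms(6))
  also have "\<dots> = card S * sqrt 2"
    by (simp add: ennreal_of_nat_eq_real_of_nat ennreal_mult)
  finally show ?thesis .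
qed

section \<open>Pseudo-Lipschitz functions\<close>

lemma norm_on_nonneg: "norm_on S x \<ge> 0"
  unfolding norm_on_def by (simp add: sum_nonneg)

lemma pseudo_lipschitz2_on_continuous:
  fixes f :: "('b::countable \<Rightarrow> real) \<Rightarrow> real"
  assumes "finite S" and "pseudo_lipschitz2_on S L f"
  shows "continuous_on UNIV f"
proof -
  have "(f \<longlongrightarrow> f x) (at x)" for x
  proof -
    define g where "g y = L * (1 + norm_on S y + norm_on S x) * norm_on S (\<lambda>a. y a - x a)" for y
    have "continuous_on UNIV g"
      unfolding g_def norm_on_def using assms(1) by (intro continuous_intros) auto
    moreover have "g x = 0" by (simp add: g_def norm_on_def)
    ultimately have g: "(g \<longlongrightarrow> 0) (at x)"
      by (metis continuous_on_eq_continuous_at isContD open_UNIV UNIV_I)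
    have "\<bar>f y - f x\<bar> \<le> g y" for y
      using assms(2) unfolding pseudo_lipschitz2_on_def g_def by blast
    then have "- g y \<le> f y - f x" "f y - f x \<le> g y" for y
      by (metis abs_le_iff minus_le_iff)+
    then have "((\<lambda>y. f y - f x) \<longlongrightarrow> 0) (at x)"
      by (intro tendsto_sandwich[OF _ _ tendsto_minus[OF g, simplified] g] always_eventually) auto
    then show ?thesis by (simp add: LIM_zero_iff)
  qed
  then show ?thesis by (simp add: continuous_at_imp_continuous_on isCont_def)
qed

lemma pseudo_lipschitz2_on_measurable:
  fixes f :: "('b::countable \<Rightarrow> real) \<Rightarrow> real"
  assumes "finite S" and "pseudo_lipschitz2_on S L f"
  shows "f \<in> borel_measurable borel"
  by (rule borel_measurable_continuous_onI[OF pseudo_lipschitz2_on_continuous[OF assms]])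

lemma pseudo_lipschitz2_on_growth:
  assumes "pseudo_lipschitz2_on S L f" and "L \<ge> 0"
  shows "\<bar>f x - f (\<lambda>_. 0)\<bar> \<le> L + 2 * L * (norm_on S x)\<^sup>2"
proof -
  define n where "n = norm_on S x"
  have "\<bar>f x - f (\<lambda>_. 0)\<bar> \<le> L * (1 + n + norm_on S (\<lambda>_. 0)) * norm_on S (\<lambda>a. x a - 0)"
    using assms(1) unfolding pseudo_lipschitz2_on_def n_def by blast
  also have "\<dots> = L * (1 + n) * n"
    by (simp add: n_def norm_on_def)
  also have "\<dots> \<le> L * (1 + 2 * n\<^sup>2)"
  proof -
    have "(1 + n) * n \<le> 1 + 2 * n\<^sup>2"
      using zero_le_power2[of "n - 1"] norm_on_nonneg[of S x]
      by (simp add: n_def power2_eq_square algebra_simps)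
    then show ?thesis using assms(2) by (simp add: mult_left_mono mult.assoc)
  qed
  finally show ?thesis by (simp add: n_def algebra_simps)
qed

section \<open>Sub-Gaussian tail bounds\<close>

lemma (in prob_space) integrable_of_nn_integral_le:
  fixes f :: "'a \<Rightarrow> real"
  assumes [measurable]: "f \<in> borel_measurable M" and nonneg: "\<And>\<omega>. \<omega> \<in> space M \<Longrightarrow> 0 \<le> f \<omega>"
    and bound: "(\<integral>\<^sup>+\<omega>. f \<omega> \<partial>M) \<le> ennreal B" and "B \<ge> 0"
  shows "integrable M f" "expectation f \<le> B"
proof -
  have "(\<integral>\<^sup>+\<omega>. norm (f \<omega>) \<partial>M) = (\<integral>\<^sup>+\<omega>. f \<omega> \<partial>M)"
    by (intro nn_integral_cong) (simp add: nonneg)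
  also have "\<dots> < \<infinity>" using bound by (simp add: le_less_trans)
  finally show int: "integrable M f" by (intro integrableI_bounded) auto
  have "ennreal (expectation f) = (\<integral>\<^sup>+\<omega>. f \<omega> \<partial>M)"
    by (rule nn_integral_eq_integral[symmetric]) (use int nonneg in auto)
  also note bound
  finally show "expectation f \<le> B" using \<open>B \<ge> 0\<close> by simp
qed

lemma (in prob_space) integrable_of_exp_moment:
  fixes Q :: "'a \<Rightarrow> real"
  assumes [measurable]: "Q \<in> borel_measurable M" and Q_nonneg: "\<And>\<omega>. \<omega> \<in> space M \<Longrightarrow> Q \<omega> \<ge> 0"
    and "s > 0" "B \<ge> 0" and "(\<integral>\<^sup>+\<omega>. exp (s * Q \<omega>) \<partial>M) \<le> ennreal B"
  shows "integrable M (\<lambda>\<omega>. exp (s * Q \<omega>))" "expectation (\<lambda>\<omega>. exp (s * Q \<omega>)) \<le> B"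
    "integrable M Q" "expectation Q \<le> B / s"
proof -
  show exp_int: "integrable M (\<lambda>\<omega>. exp (s * Q \<omega>))"
    and exp_le: "expectation (\<lambda>\<omega>. exp (s * Q \<omega>)) \<le> B"
    using integrable_of_nn_integral_le[of "\<lambda>\<omega>. exp (s * Q \<omega>)" B] assms by auto
  have Q_le: "Q \<omega> \<le> exp (s * Q \<omega>) / s" for \<omega>
  proof -
    have "s * Q \<omega> \<le> exp (s * Q \<omega>)"
      using exp_ge_add_one_self[of "s * Q \<omega>"] by linarith
    then show ?thesis using \<open>s > 0\<close> by (simp add: field_simps)
  qed
  show Q_int: "integrable M Q"
    by (rule Bochner_Integration.integrable_bound[of _ "\<lambda>\<omega>. exp (s * Q \<omega>) / s"])
       (use exp_int Q_nonneg Q_le \<open>s > 0\<close> in \<open>auto intro!: AE_I2\<close>)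
  have "expectation Q \<le> expectation (\<lambda>\<omega>. exp (s * Q \<omega>)) / s"
    using integral_mono[OF Q_int _ Q_le] exp_int by simp
  also have "\<dots> \<le> B / s"
    using exp_le \<open>s > 0\<close> by (simp add: divide_right_mono)
  finally show "expectation Q \<le> B / s" .
qed

lemma (in prob_space) mgf_le_of_exp_abs_moment:
  fixes X :: "'a \<Rightarrow> real"
  assumes "integrable M X" "expectation X = 0"
    and "\<mu> > 0" and exp_int: "integrable M (\<lambda>\<omega>. exp (\<mu> * \<bar>X \<omega>\<bar>))"
    and exp_le: "expectation (\<lambda>\<omega>. exp (\<mu> * \<bar>X \<omega>\<bar>)) \<le> R"
    and l: "\<bar>l\<bar> \<le> \<mu> / 2"
  shows "(\<integral>\<^sup>+\<omega>. exp (l * X \<omega>) \<partial>M) \<le> exp (4 * R / \<mu>\<^sup>2 * l\<^sup>2)"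
proof -
  have [measurable]: "X \<in> borel_measurable M"
    using \<open>integrable M X\<close> by auto
  have pointwise: "exp (l * X \<omega>) \<le> 1 + l * X \<omega> + l\<^sup>2 * (exp (\<mu> * \<bar>X \<omega>\<bar>) / (\<mu> / 2)\<^sup>2)" for \<omega>
    using exp_le_quadratic_bound[of "\<mu> / 2" l "X \<omega>"] \<open>\<mu> > 0\<close> l by simp
  have "l * X \<omega> \<le> \<mu> * \<bar>X \<omega>\<bar>" for \<omega>
  proof -
    have "l * X \<omega> \<le> \<bar>l\<bar> * \<bar>X \<omega>\<bar>" by (metis abs_ge_self abs_mult)
    also have "\<dots> \<le> \<mu> * \<bar>X \<omega>\<bar>" using l \<open>\<mu> > 0\<close> by (intro mult_right_mono) auto
    finally show ?thesis .
  qed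
  then have int: "integrable M (\<lambda>\<omega>. exp (l * X \<omega>))"
    by (intro Bochner_Integration.integrable_bound[OF exp_int]) (auto intro!: AE_I2)
  have "expectation (\<lambda>\<omega>. exp (l * X \<omega>))
        \<le> expectation (\<lambda>\<omega>. 1 + l * X \<omega> + l\<^sup>2 * (exp (\<mu> * \<bar>X \<omega>\<bar>) / (\<mu> / 2)\<^sup>2))"
    by (intro integral_mono pointwise) (use int assms in auto)
  also have "\<dots> = 1 + l\<^sup>2 * (expectation (\<lambda>\<omega>. exp (\<mu> * \<bar>X \<omega>\<bar>)) / (\<mu> / 2)\<^sup>2)"
    using assms by (simp add: prob_space)
  also have "\<dots> \<le> 1 + l\<^sup>2 * (R / (\<mu> / 2)\<^sup>2)"
    using exp_le by (intro add_left_mono mult_left_mono divide_right_mono) auto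
  also have "\<dots> = 1 + 4 * R / \<mu>\<^sup>2 * l\<^sup>2"
    by (simp add: power_divide)
  also have "\<dots> \<le> exp (4 * R / \<mu>\<^sup>2 * l\<^sup>2)"
    by (rule exp_ge_add_one_self)
  finally have "expectation (\<lambda>\<omega>. exp (l * X \<omega>)) \<le> exp (4 * R / \<mu>\<^sup>2 * l\<^sup>2)" .
  moreover have "(\<integral>\<^sup>+\<omega>. exp (l * X \<omega>) \<partial>M) = expectation (\<lambda>\<omega>. exp (l * X \<omega>))"
    by (rule nn_integral_eq_integral) (use int in auto)
  ultimately show ?thesis by (simp add: ennreal_leI)
qed

lemma (in prob_space) exp_abs_centered_moment_le:
  fixes F Q :: "'a \<Rightarrow> real"
  assumes [measurable]: "F \<in> borel_measurable M" "Q \<in> borel_measurable M"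
    and Q_nonneg: "\<And>\<omega>. \<omega> \<in> space M \<Longrightarrow> Q \<omega> \<ge> 0"
    and F_bound: "\<And>\<omega>. \<omega> \<in> space M \<Longrightarrow> \<bar>F \<omega> - c\<bar> \<le> L + 2 * L * Q \<omega>"
    and "L > 0" "s > 0" "B \<ge> 0" and Q_moment: "(\<integral>\<^sup>+\<omega>. exp (s * Q \<omega>) \<partial>M) \<le> ennreal B"
  shows "integrable M F"
    and "integrable M (\<lambda>\<omega>. exp (s / (2 * L) * \<bar>F \<omega> - expectation F\<bar>))"
    and "expectation (\<lambda>\<omega>. exp (s / (2 * L) * \<bar>F \<omega> - expectation F\<bar>)) \<le> exp (s + B) * B"
proof -
  note Q = integrable_of_exp_moment[OF assms(2) Q_nonneg \<open>s > 0\<close> \<open>B \<ge> 0\<close> Q_moment]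
  have "integrable M (\<lambda>\<omega>. F \<omega> - c)"
    by (rule Bochner_Integration.integrable_bound[of _ "\<lambda>\<omega>. L + 2 * L * Q \<omega>"])
       (use Q(3) F_bound in \<open>auto intro!: AE_I2 intro: order_trans[OF _ abs_ge_self]\<close>)
  from this integrable_const[of c] have "integrable M (\<lambda>\<omega>. (F \<omega> - c) + c)"
    by (rule Bochner_Integration.integrable_add)
  then show F_int: "integrable M F" by simp
  have "\<bar>expectation F - c\<bar> = \<bar>expectation (\<lambda>\<omega>. F \<omega> - c)\<bar>"
    using F_int by (simp add: prob_space)
  also have "\<dots> \<le> expectation (\<lambda>\<omega>. \<bar>F \<omega> - c\<bar>)"
    by (rule integral_abs_bound)
  also have "\<dots> \<le> expectation (\<lambda>\<omega>. L + 2 * L * Q \<omega>)"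
    by (intro integral_mono) (use F_int Q(3) F_bound in auto)
  also have "\<dots> \<le> L + 2 * L * (B / s)"
    using Q(3,4) \<open>L > 0\<close> by (simp add: prob_space del: times_divide_eq_right)
  finally have EF: "\<bar>expectation F - c\<bar> \<le> L + 2 * L * (B / s)" .
  have bound: "exp (s / (2 * L) * \<bar>F \<omega> - expectation F\<bar>) \<le> exp (s + B) * exp (s * Q \<omega>)"
    if "\<omega> \<in> space M" for \<omega>
  proof -
    have "\<bar>F \<omega> - expectation F\<bar> \<le> 2 * L + 2 * L * (B / s) + 2 * L * Q \<omega>"
      using F_bound[OF that] EF by linarith
    then have "s / (2 * L) * \<bar>F \<omega> - expectation F\<bar> \<le> s / (2 * L) * (2 * L + 2 * L * (B / s) + 2 * L * Q \<omega>)"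
      using \<open>L > 0\<close> \<open>s > 0\<close> by (intro mult_left_mono) auto
    also have "\<dots> = s + B + s * Q \<omega>"
      using \<open>L > 0\<close> \<open>s > 0\<close> by (simp add: field_simps)
    finally show ?thesis by (simp add: exp_add[symmetric])
  qed
  show int: "integrable M (\<lambda>\<omega>. exp (s / (2 * L) * \<bar>F \<omega> - expectation F\<bar>))"
    by (rule Bochner_Integration.integrable_bound[of _ "\<lambda>\<omega>. exp (s + B) * exp (s * Q \<omega>)"])
       (use Q(1) bound in \<open>auto intro!: AE_I2\<close>)
  have "expectation (\<lambda>\<omega>. exp (s / (2 * L) * \<bar>F \<omega> - expectation F\<bar>))
      \<le> expectation (\<lambda>\<omega>. exp (s + B) * exp (s * Q \<omega>))"
    by (intro integral_mono) (use Q(1) int bound in auto)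
  also have "\<dots> \<le> exp (s + B) * B"
    using Q(2) by simp
  finally show "expectation (\<lambda>\<omega>. exp (s / (2 * L) * \<bar>F \<omega> - expectation F\<bar>)) \<le> exp (s + B) * B" .
qed

lemma (in prob_space) mgf_centered_le_of_exp_moment:
  fixes F Q :: "'a \<Rightarrow> real"
  assumes [measurable]: "F \<in> borel_measurable M" "Q \<in> borel_measurable M"
    and "\<And>\<omega>. \<omega> \<in> space M \<Longrightarrow> Q \<omega> \<ge> 0"
    and "\<And>\<omega>. \<omega> \<in> space M \<Longrightarrow> \<bar>F \<omega> - c\<bar> \<le> L + 2 * L * Q \<omega>"
    and "L > 0" "s > 0" "B \<ge> 0" and "(\<integral>\<^sup>+\<omega>. exp (s * Q \<omega>) \<partial>M) \<le> ennreal B"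
    and "\<bar>l\<bar> \<le> s / (4 * L)"
  shows "(\<integral>\<^sup>+\<omega>. exp (l * (F \<omega> - expectation F)) \<partial>M)
           \<le> exp (16 * L\<^sup>2 / s\<^sup>2 * B * exp (s + B) * l\<^sup>2)"
proof -
  note moment = exp_abs_centered_moment_le[OF assms(1-8)]
  have "(\<integral>\<^sup>+\<omega>. exp (l * (F \<omega> - expectation F)) \<partial>M)
      \<le> exp (4 * (exp (s + B) * B) / (s / (2 * L))\<^sup>2 * l\<^sup>2)"
    by (rule mgf_le_of_exp_abs_moment) (use moment assms in \<open>auto simp: prob_space\<close>)
  also have "4 * (exp (s + B) * B) / (s / (2 * L))\<^sup>2 = 16 * L\<^sup>2 / s\<^sup>2 * B * exp (s + B)"
    using \<open>s > 0\<close> by (simp add: power_divide field_simps)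
  finally show ?thesis .
qed

lemma (in prob_space) prob_indep_sum_ge_le:
  fixes J :: "'i set" and X :: "'i \<Rightarrow> 'a \<Rightarrow> real" and C l a \<sigma> :: real and n :: nat
  assumes "finite J" and indep: "indep_vars (\<lambda>_. borel) X J"
    and mgf: "\<And>i l'. i \<in> J \<Longrightarrow> \<bar>l'\<bar> \<le> l \<Longrightarrow>
      (\<integral>\<^sup>+\<omega>. exp (l' * X i \<omega>) \<partial>M) \<le> exp (C * l'\<^sup>2)"
    and "C \<ge> 0" "l > 0" "\<bar>\<sigma>\<bar> = 1" "card J \<le> n"
  shows "prob {\<omega> \<in> space M. \<sigma> * (\<Sum>i\<in>J. X i \<omega>) \<ge> a} \<le> exp (n * C * l\<^sup>2 - l * a)"
proof -
  have [measurable]: "\<And>i. i \<in> J \<Longrightarrow> X i \<in> borel_measurable M"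
    using indep by (auto simp: indep_vars_def)
  have "emeasure M {\<omega> \<in> space M. \<sigma> * (\<Sum>i\<in>J. X i \<omega>) \<ge> a}
     \<le> exp (- l * a) *
       (\<integral>\<^sup>+\<omega>. ennreal (exp (l * (\<sigma> * (\<Sum>i\<in>J. X i \<omega>)))) * indicator (space M) \<omega> \<partial>M)"
    by (rule Chernoff_ineq_nn_integral_ge) (use \<open>l > 0\<close> in auto)
  also have "(\<integral>\<^sup>+\<omega>. ennreal (exp (l * (\<sigma> * (\<Sum>i\<in>J. X i \<omega>)))) * indicator (space M) \<omega> \<partial>M)
      = (\<integral>\<^sup>+\<omega>. (\<Prod>i\<in>J. ennreal (exp ((l * \<sigma>) * X i \<omega>))) \<partial>M)"
    by (intro nn_integral_cong)
       (simp add: sum_distrib_left exp_sum \<open>finite J\<close> prod_ennreal mult.assoc)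
  also have "\<dots> = (\<Prod>i\<in>J. (\<integral>\<^sup>+\<omega>. exp ((l * \<sigma>) * X i \<omega>) \<partial>M))"
    by (intro indep_vars_nn_integral \<open>finite J\<close> indep_vars_compose2[OF indep]) auto
  also have "\<dots> \<le> (\<Prod>i\<in>J. ennreal (exp (C * l\<^sup>2)))"
  proof (intro prod_mono_ennreal)
    fix i assume "i \<in> J"
    have "\<sigma>\<^sup>2 = 1"
      using \<open>\<bar>\<sigma>\<bar> = 1\<close> by (metis power2_abs power_one)
    then have "\<bar>l * \<sigma>\<bar> \<le> l" "(l * \<sigma>)\<^sup>2 = l\<^sup>2"
      using \<open>\<bar>\<sigma>\<bar> = 1\<close> \<open>l > 0\<close> by (simp_all add: abs_mult power_mult_distrib)
    with mgf[OF \<open>i \<in> J\<close>, of "l * \<sigma>"]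
    show "(\<integral>\<^sup>+\<omega>. exp ((l * \<sigma>) * X i \<omega>) \<partial>M) \<le> ennreal (exp (C * l\<^sup>2))"
      by simp
  qed
  also have "\<dots> \<le> ennreal (exp (C * l\<^sup>2) ^ n)"
    using \<open>card J \<le> n\<close> \<open>C \<ge> 0\<close> by (simp add: ennreal_power power_increasing)
  also have "exp (C * l\<^sup>2) ^ n = exp (n * C * l\<^sup>2)"
    by (simp add: exp_of_nat_mult[symmetric] mult_ac)
  finally have "emeasure M {\<omega> \<in> space M. \<sigma> * (\<Sum>i\<in>J. X i \<omega>) \<ge> a}
     \<le> ennreal (exp (- l * a) * exp (n * C * l\<^sup>2))"
    by (simp add: ennreal_mult) (meson mult_left_mono zero_le)
  then show ?thesis by (simp add: emeasure_eq_measure mult_exp_exp)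
qed

lemma exists_colour_class_signed_sum_ge:
  fixes x :: "'i \<Rightarrow> real" and colour :: "'i \<Rightarrow> 'c"
  assumes "finite I" "I \<noteq> {}" "card (colour ` I) \<le> m" and "0 \<le> b" "b \<le> \<bar>\<Sum>i\<in>I. x i\<bar>"
  shows "\<exists>c\<in>colour ` I. \<exists>\<sigma>\<in>{1, -1}. b / m \<le> \<sigma> * (\<Sum>i\<in>{i\<in>I. colour i = c}. x i)"
proof (rule ccontr)
  define S where "S c = (\<Sum>i\<in>{i\<in>I. colour i = c}. x i)" for c
  assume "\<not> ?thesis"
  then have small: "\<bar>S c\<bar> < b / m" if "c \<in> colour ` I" for c
    using that by (auto simp: S_def abs_if not_le)
  have "m > 0"
    using assms(1-3) by (metis card_0_eq finite_imageI gr_zeroI image_is_empty le_zero_eq)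
  have "(\<Sum>i\<in>I. x i) = (\<Sum>c\<in>colour ` I. S c)"
    unfolding S_def by (rule sum.image_gen[OF \<open>finite I\<close>])
  then have "\<bar>\<Sum>i\<in>I. x i\<bar> \<le> (\<Sum>c\<in>colour ` I. \<bar>S c\<bar>)"
    by (simp add: sum_abs)
  also have "\<dots> < (\<Sum>c\<in>colour ` I. b / m)"
    by (rule sum_strict_mono[OF _ _ small]) (use assms(1,2) in auto)
  also have "\<dots> = card (colour ` I) * (b / m)"
    by simp
  also have "\<dots> \<le> m * (b / m)"
    using assms(3,4) by (intro mult_right_mono) auto
  also have "\<dots> = b"
    using \<open>m > 0\<close> by simp
  finally show False
    using assms(5) by simp
qed

lemma (in prob_space) prob_abs_sum_ge_le_of_colouring:
  fixes I :: "'i set" and X :: "'i \<Rightarrow> 'a \<Rightarrow> real" and colour :: "'i \<Rightarrow> 'c" and C l e :: real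
  assumes "finite I" "I \<noteq> {}"
    and indep: "\<And>c. indep_vars (\<lambda>_. borel) X {i\<in>I. colour i = c}"
    and mgf: "\<And>i l'. i \<in> I \<Longrightarrow> \<bar>l'\<bar> \<le> l \<Longrightarrow>
      (\<integral>\<^sup>+\<omega>. exp (l' * X i \<omega>) \<partial>M) \<le> exp (C * l'\<^sup>2)"
    and "C \<ge> 0" "l > 0" "e > 0" and colours: "card (colour ` I) \<le> m"
  shows "prob {\<omega> \<in> space M. card I * e \<le> \<bar>\<Sum>i\<in>I. X i \<omega>\<bar>}
           \<le> 2 * m * exp (card I * (C * l\<^sup>2 - l * e / m))"
proof -
  define n where "n = card I"
  define a where "a = n * e / m"
  define S where "S c \<omega> = (\<Sum>i\<in>{i\<in>I. colour i = c}. X i \<omega>)" for c \<omega>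
  define A where "A = (\<lambda>(c, \<sigma>::real). {\<omega> \<in> space M. \<sigma> * S c \<omega> \<ge> a})"
  define P where "P = colour ` I \<times> {1::real, -1}"
  have "finite P" using \<open>finite I\<close> by (simp add: P_def)
  have [measurable]: "X i \<in> borel_measurable M" if "i \<in> I" for i
    using indep[of "colour i"] that by (auto simp: indep_vars_def)
  have "{\<omega> \<in> space M. n * e \<le> \<bar>\<Sum>i\<in>I. X i \<omega>\<bar>} \<subseteq> (\<Union>p\<in>P. A p)"
    using exists_colour_class_signed_sum_ge[OF \<open>finite I\<close> \<open>I \<noteq> {}\<close> colours] \<open>e > 0\<close>
    by (fastforce simp: P_def A_def S_def a_def)
  then have "prob {\<omega> \<in> space M. n * e \<le> \<bar>\<Sum>i\<in>I. X i \<omega>\<bar>} \<le> prob (\<Union>p\<in>P. A p)"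
    by (rule finite_measure_mono) (use \<open>finite P\<close> in \<open>auto simp: A_def S_def\<close>)
  also have "\<dots> \<le> (\<Sum>p\<in>P. prob (A p))"
    by (rule finite_measure_subadditive_finite[OF \<open>finite P\<close>]) (auto simp: A_def S_def)
  also have "\<dots> \<le> (\<Sum>p\<in>P. exp (n * C * l\<^sup>2 - l * a))"
  proof (rule sum_mono)
    fix p assume "p \<in> P"
    then obtain c \<sigma> where p: "p = (c, \<sigma>)" "\<bar>\<sigma>\<bar> = 1" by (auto simp: P_def)
    have "card {i\<in>I. colour i = c} \<le> n"
      unfolding n_def using \<open>finite I\<close> by (intro card_mono) auto
    then have "prob {\<omega> \<in> space M. \<sigma> * (\<Sum>i\<in>{i\<in>I. colour i = c}. X i \<omega>) \<ge> a}
        \<le> exp (n * C * l\<^sup>2 - l * a)"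
      using \<open>finite I\<close> mgf by (intro prob_indep_sum_ge_le[OF _ indep _ \<open>C \<ge> 0\<close> \<open>l > 0\<close> p(2)]) auto
    then show "prob (A p) \<le> exp (n * C * l\<^sup>2 - l * a)"
      by (simp add: p A_def S_def)
  qed
  also have "\<dots> = 2 * card (colour ` I) * exp (n * C * l\<^sup>2 - l * a)"
    using \<open>finite I\<close> by (simp add: P_def card_cartesian_product)
  also have "\<dots> \<le> 2 * m * exp (n * (C * l\<^sup>2 - l * e / m))"
    using colours by (simp add: a_def algebra_simps)
  finally show ?thesis by (simp add: n_def)
qed

section \<open>Windows and residue classes on the grid\<close>

lemma finite_grid: "finite (grid p N)"
proof (rule finite_subset)
  show "grid p N \<subseteq> {xs. set xs \<subseteq> {1..int N} \<and> length xs = p}"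
    unfolding grid_def by auto
qed (simp add: finite_lists_length_eq)

lemma grid_nonempty: "N \<ge> 1 \<Longrightarrow> grid p N \<noteq> {}"
  using replicate_eq_replicate[of p 1 p] by (auto simp: grid_def intro!: exI[of _ "replicate p 1"])

lemma window_subset_grid: "window p N k i \<subseteq> grid p N"
  unfolding window_def by auto

lemma finite_window: "finite (window p N k i)"
  using finite_subset[OF window_subset_grid finite_grid] .

lemma self_in_window: "i \<in> grid p N \<Longrightarrow> i \<in> window p N k i"
  unfolding window_def by auto

lemma card_window_le:
  assumes "i \<in> grid p N"
  shows "card (window p N k i) \<le> (2 * k + 1) ^ p"
proof -
  have li: "length i = p" using assms by (simp add: grid_def)
  define V where "V = {v. set v \<subseteq> {- int k..int k} \<and> length v = p}"
  have "window p N k i \<subseteq> (\<lambda>v. map2 (+) v i) ` V"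
  proof
    fix j assume j: "j \<in> window p N k i"
    have lj: "length j = p" using j by (simp add: window_def grid_def)
    have "map2 (-) j i \<in> V"
      using j li lj by (force simp: V_def window_def in_set_conv_nth abs_le_iff)
    moreover have "j = map2 (+) (map2 (-) j i) i"
      by (rule nth_equalityI) (use li lj in auto)
    ultimately show "j \<in> (\<lambda>v. map2 (+) v i) ` V" by blast
  qed
  then have "card (window p N k i) \<le> card ((\<lambda>v. map2 (+) v i) ` V)"
    by (intro card_mono finite_imageI) (auto simp: V_def finite_lists_length_eq)
  also have "\<dots> \<le> card V" by (rule card_image_le) (auto simp: V_def finite_lists_length_eq)
  also have "card V = card {- int k..int k} ^ p"
    unfolding V_def by (rule card_lists_length_eq) simp
  also have "card {- int k..int k} = 2 * k + 1" by simp
  finally show ?thesis .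
qed

definition residue_class :: "nat \<Rightarrow> int list \<Rightarrow> int list" where
  "residue_class k i = map (\<lambda>x. x mod (2 * int k + 1)) i"

lemma card_residue_classes_le: "card (residue_class k ` grid p N) \<le> (2 * k + 1) ^ p"
proof -
  define V where "V = {v. set v \<subseteq> {0..2 * int k} \<and> length v = p}"
  have "x mod (2 * int k + 1) \<le> 2 * int k" for x
    using pos_mod_bound[of "2 * int k + 1" x] by simp
  then have "residue_class k ` grid p N \<subseteq> V"
    by (auto simp: V_def residue_class_def grid_def)
  then have "card (residue_class k ` grid p N) \<le> card V"
    by (intro card_mono) (auto simp: V_def finite_lists_length_eq)
  also have "card V = card {0..2 * int k} ^ p"
    unfolding V_def by (rule card_lists_length_eq) simp
  also have "card {0..2 * int k} = 2 * k + 1" by simp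
  finally show ?thesis .
qed

lemma window_disjoint_same_residue_class:
  assumes "i \<in> grid p N" "i' \<in> grid p N" "residue_class k i = residue_class k i'" "i \<noteq> i'"
  shows "window p N k i \<inter> window p N k i' = {}"
proof (rule ccontr)
  assume "window p N k i \<inter> window p N k i' \<noteq> {}"
  then obtain j where j: "j \<in> window p N k i" "j \<in> window p N k i'" by blast
  have li: "length i = p" "length i' = p" using assms by (auto simp: grid_def)
  obtain d where d: "d < p" "i ! d \<noteq> i' ! d"
    using assms(4) li nth_equalityI by metis
  have "i ! d mod (2 * int k + 1) = i' ! d mod (2 * int k + 1)"
    using arg_cong[OF assms(3), of "\<lambda>v. v ! d"] d li by (simp add: residue_class_def)
  then have "(2 * int k + 1) dvd (i ! d - i' ! d)" by (simp add: mod_eq_dvd_iff)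
  then have "\<bar>2 * int k + 1\<bar> \<le> \<bar>i ! d - i' ! d\<bar>"
    using d(2) by (intro dvd_imp_le_int) auto
  moreover have "\<bar>j ! d - i ! d\<bar> \<le> int k" "\<bar>j ! d - i' ! d\<bar> \<le> int k"
    using j d by (auto simp: window_def)
  ultimately show False by linarith
qed

section \<open>Observations of the Gaussian field\<close>

lemma gaussian_field_entry:
  assumes "gaussian_field p N t \<Sigma> M Z" "r \<in> {1..t}" "j \<in> grid p N"
  shows "Z r j \<in> borel_measurable M" "distributed M lborel (Z r j) (normal_density 0 1)"
  using assms unfolding gaussian_field_def by blast+

lemma obs_measurable:
  assumes "gaussian_field p N t \<Sigma> M Z"
  shows "obs p N k t Z i \<in> borel_measurable M"
proof (rule measurable_coordinatewise_then_product)
  fix a :: "int list \<times> nat"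
  obtain j r where a: "a = (j, r)" by (cases a)
  show "(\<lambda>\<omega>. obs p N k t Z i \<omega> a) \<in> borel_measurable M"
  proof (cases "j \<in> window p N k i \<and> r \<in> {1..t}")
    case True
    then have "Z r j \<in> borel_measurable M"
      using gaussian_field_entry(1)[OF assms] window_subset_grid by blast
    with True show ?thesis by (simp add: obs_def a)
  qed (auto simp: obs_def a)
qed

lemma obs_pseudo_lipschitz2_measurable:
  assumes "gaussian_field p N t \<Sigma> M Z" "pseudo_lipschitz2_on (window p N k i \<times> {1..t}) L f"
  shows "(\<lambda>\<omega>. f (obs p N k t Z i \<omega>)) \<in> borel_measurable M"
  using measurable_compose[OF obs_measurable[OF assms(1)] pseudo_lipschitz2_on_measurable[OF _ assms(2)]]
  by (simp add: finite_window)

lemma norm_on_obs_sq: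
  "(norm_on (window p N k i \<times> {1..t}) (obs p N k t Z i \<omega>))\<^sup>2
     = (\<Sum>a\<in>window p N k i \<times> {1..t}. (Z (snd a) (fst a) \<omega>)\<^sup>2)"
  unfolding norm_on_def obs_def by (auto simp: sum_nonneg intro!: sum.cong)

definition block_vector ::
    "int list set \<Rightarrow> nat \<Rightarrow> (int list \<Rightarrow> nat \<Rightarrow> real) \<Rightarrow> int list \<times> nat \<Rightarrow> real" where
  "block_vector W t u = (\<lambda>(a, r). if a \<in> W \<and> r \<in> {1..t} then u a r else 0)"

lemma obs_eq_block_vector:
  "obs p N k t Z i \<omega> = block_vector (window p N k i) t (\<lambda>j\<in>window p N k i. \<lambda>r\<in>{1..t}. Z r j \<omega>)"
  by (auto simp: block_vector_def obs_def fun_eq_iff)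

lemma block_vector_measurable:
  "block_vector W t \<in> measurable (PiM W (\<lambda>_. PiM {1..t} (\<lambda>_. borel))) borel"
proof (rule measurable_coordinatewise_then_product)
  fix x :: "int list \<times> nat"
  obtain a r where x: "x = (a, r)" by (cases x)
  show "(\<lambda>u. block_vector W t u x) \<in> borel_measurable (PiM W (\<lambda>_. PiM {1..t} (\<lambda>_. borel)))"
  proof (cases "a \<in> W \<and> r \<in> {1..t}")
    case True
    have component: "(\<lambda>u::int list \<Rightarrow> nat \<Rightarrow> real. u a)
        \<in> measurable (PiM W (\<lambda>_. PiM {1..t} (\<lambda>_. borel))) (PiM {1..t} (\<lambda>_. borel :: real measure))"
      using True by (intro measurable_component_singleton) auto
    have entry: "(\<lambda>v::nat \<Rightarrow> real. v r) \<in> measurable (PiM {1..t} (\<lambda>_. borel)) (borel :: real measure)"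
      using True by (intro measurable_component_singleton) auto
    have "(\<lambda>u::int list \<Rightarrow> nat \<Rightarrow> real. u a r) \<in> borel_measurable (PiM W (\<lambda>_. PiM {1..t} (\<lambda>_. borel)))"
      using measurable_compose[OF component entry] by simp
    with True show ?thesis by (simp add: block_vector_def x)
  qed (auto simp: block_vector_def x)
qed

lemma (in prob_space) indep_vars_obs_same_residue_class:
  assumes gf: "gaussian_field p N t \<Sigma> M Z"
    and pl: "\<And>i. i \<in> grid p N \<Longrightarrow> pseudo_lipschitz2_on (window p N k i \<times> {1..t}) L (f i)"
  shows "indep_vars (\<lambda>_. borel) (\<lambda>i \<omega>. f i (obs p N k t Z i \<omega>) - E i)
           {i \<in> grid p N. residue_class k i = c}"
proof -
  define J where "J = {i \<in> grid p N. residue_class k i = c}"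
  define V where "V = (\<lambda>i \<omega>. \<lambda>r\<in>{1..t}. Z r i \<omega>)"
  have sites: "indep_vars (\<lambda>_. PiM {1..t} (\<lambda>_. borel)) V (grid p N)"
    using gf unfolding gaussian_field_def V_def by blast
  have "disjoint_family_on (window p N k) J"
    unfolding disjoint_family_on_def J_def using window_disjoint_same_residue_class by blast
  then have "indep_vars (\<lambda>j. PiM (window p N k j) (\<lambda>_. PiM {1..t} (\<lambda>_. borel)))
      (\<lambda>j \<omega>. \<lambda>i\<in>window p N k j. V i \<omega>) J"
    by (intro indep_vars_restrict[OF sites]) (auto simp: J_def window_subset_grid[THEN subsetD])
  moreover have "(\<lambda>u. f j (block_vector (window p N k j) t u) - E j)
      \<in> measurable (PiM (window p N k j) (\<lambda>_. PiM {1..t} (\<lambda>_. borel))) borel" if "j \<in> J" for j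
    using measurable_compose[OF block_vector_measurable pseudo_lipschitz2_on_measurable[OF _ pl]] that
    by (simp add: J_def finite_window)
  ultimately have "indep_vars (\<lambda>_. borel)
      (\<lambda>j \<omega>. f j (block_vector (window p N k j) t (\<lambda>i\<in>window p N k j. V i \<omega>)) - E j) J"
    by (rule indep_vars_compose2)
  then show ?thesis
    unfolding J_def V_def obs_eq_block_vector .
qed

lemma (in prob_space) mgf_obs_centered_le:
  fixes f :: "(int list \<times> nat \<Rightarrow> real) \<Rightarrow> real" and D :: nat
  defines "s \<equiv> 1 / (4 * real D)" and "B \<equiv> real D * sqrt 2"
  assumes gf: "gaussian_field p N t \<Sigma> M Z" and "i \<in> grid p N" "t \<ge> 1"
    and pl: "pseudo_lipschitz2_on (window p N k i \<times> {1..t}) L f" and "L > 0"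
    and D: "card (window p N k i \<times> {1..t}) \<le> D" and l: "\<bar>l\<bar> \<le> s / (4 * L)"
  shows "(\<integral>\<^sup>+\<omega>. exp (l * (f (obs p N k t Z i \<omega>) - expectation (\<lambda>\<omega>'. f (obs p N k t Z i \<omega>')))) \<partial>M)
           \<le> exp (16 * L\<^sup>2 / s\<^sup>2 * B * exp (s + B) * l\<^sup>2)"
proof -
  define S where "S = window p N k i \<times> {1..t}"
  define Q where "Q \<omega> = (\<Sum>a\<in>S. (Z (snd a) (fst a) \<omega>)\<^sup>2)" for \<omega>
  have "finite S" by (simp add: S_def finite_window)
  have "(i, 1) \<in> S"
    using \<open>i \<in> grid p N\<close> \<open>t \<ge> 1\<close> by (simp add: S_def self_in_window)
  then have "S \<noteq> {}" by blast
  then have "card S \<ge> 1"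
    using \<open>finite S\<close> by (simp add: Suc_le_eq card_gt_0_iff)
  then have "D \<ge> 1"
    using D by (simp add: S_def)
  have entry: "Z (snd a) (fst a) \<in> borel_measurable M"
      "distributed M lborel (Z (snd a) (fst a)) (normal_density 0 1)" if "a \<in> S" for a
    using gaussian_field_entry[OF gf] that window_subset_grid[of p N k i] by (auto simp: S_def)
  have Q_measurable: "Q \<in> borel_measurable M"
    unfolding Q_def by (intro borel_measurable_sum borel_measurable_power entry(1))
  have Q_nonneg: "Q \<omega> \<ge> 0" for \<omega>
    unfolding Q_def by (simp add: sum_nonneg)
  have "s > 0" using \<open>D \<ge> 1\<close> by (simp add: s_def)
  have growth: "\<bar>f (obs p N k t Z i \<omega>) - f (\<lambda>_. 0)\<bar> \<le> L + 2 * L * Q \<omega>" for \<omega>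
  proof -
    have "\<bar>f (obs p N k t Z i \<omega>) - f (\<lambda>_. 0)\<bar> \<le> L + 2 * L * (norm_on S (obs p N k t Z i \<omega>))\<^sup>2"
      unfolding S_def by (rule pseudo_lipschitz2_on_growth[OF pl]) (use \<open>L > 0\<close> in simp)
    also have "(norm_on S (obs p N k t Z i \<omega>))\<^sup>2 = Q \<omega>"
      unfolding S_def Q_def by (rule norm_on_obs_sq)
    finally show ?thesis .
  qed
  have Q_moment: "(\<integral>\<^sup>+\<omega>. exp (s * Q \<omega>) \<partial>M) \<le> ennreal B"
  proof -
    have "s * card S \<le> 1/4"
      using D \<open>D \<ge> 1\<close> by (simp add: s_def S_def field_simps)
    then have "(\<integral>\<^sup>+\<omega>. exp (s * Q \<omega>) \<partial>M) \<le> card S * sqrt 2"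
      unfolding Q_def using entry \<open>finite S\<close> \<open>S \<noteq> {}\<close>
      by (intro nn_integral_exp_sum_sq_std_normal_le) (auto simp: s_def)
    also have "\<dots> \<le> ennreal B"
      unfolding B_def using D by (intro ennreal_leI) (simp add: S_def)
    finally show ?thesis .
  qed
  have "B \<ge> 0" by (simp add: B_def)
  show ?thesis
    by (rule mgf_centered_le_of_exp_moment[OF obs_pseudo_lipschitz2_measurable[OF gf pl]
          Q_measurable Q_nonneg growth \<open>L > 0\<close> \<open>s > 0\<close> \<open>B \<ge> 0\<close> Q_moment l])
qed

lemma (in prob_space) prob_abs_sum_obs_ge_le:
  fixes f :: "int list \<Rightarrow> (int list \<times> nat \<Rightarrow> real) \<Rightarrow> real" and p k t :: nat and L l e :: real
  defines "m \<equiv> (2 * k + 1) ^ p"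
  defines "s \<equiv> 1 / (4 * real (m * t))" and "B \<equiv> real (m * t) * sqrt 2"
  assumes gf: "gaussian_field p N t \<Sigma> M Z" and "N \<ge> 1" "t \<ge> 1" "L > 0"
    and pl: "\<And>i. i \<in> grid p N \<Longrightarrow> pseudo_lipschitz2_on (window p N k i \<times> {1..t}) L (f i)"
    and "0 < l" "l \<le> s / (4 * L)" "e > 0"
  shows "prob {\<omega> \<in> space M. card (grid p N) * e \<le>
             \<bar>\<Sum>i\<in>grid p N. f i (obs p N k t Z i \<omega>) - expectation (\<lambda>\<omega>'. f i (obs p N k t Z i \<omega>'))\<bar>}
           \<le> 2 * m * exp (card (grid p N) * (16 * L\<^sup>2 / s\<^sup>2 * B * exp (s + B) * l\<^sup>2 - l * e / m))"
proof (rule prob_abs_sum_ge_le_of_colouring)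
  show "finite (grid p N)" "grid p N \<noteq> {}"
    using finite_grid grid_nonempty \<open>N \<ge> 1\<close> by auto
  show "card (residue_class k ` grid p N) \<le> m"
    unfolding m_def by (rule card_residue_classes_le)
  show "indep_vars (\<lambda>_. borel)
      (\<lambda>i \<omega>. f i (obs p N k t Z i \<omega>) - expectation (\<lambda>\<omega>'. f i (obs p N k t Z i \<omega>')))
      {i \<in> grid p N. residue_class k i = c}" for c
    by (rule indep_vars_obs_same_residue_class[OF gf pl])
  show "(\<integral>\<^sup>+\<omega>. exp (l' * (f i (obs p N k t Z i \<omega>) - expectation (\<lambda>\<omega>'. f i (obs p N k t Z i \<omega>')))) \<partial>M)
      \<le> exp (16 * L\<^sup>2 / s\<^sup>2 * B * exp (s + B) * l'\<^sup>2)"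
    if "i \<in> grid p N" "\<bar>l'\<bar> \<le> l" for i l'
  proof -
    have "card (window p N k i \<times> {1..t}) \<le> m * t"
      using card_window_le[OF \<open>i \<in> grid p N\<close>, of k] by (simp add: card_cartesian_product m_def)
    then show ?thesis
      unfolding s_def B_def using that \<open>l \<le> s / (4 * L)\<close>
      by (intro mgf_obs_centered_le[OF gf _ \<open>t \<ge> 1\<close> pl \<open>L > 0\<close>]) (auto simp: s_def)
  qed
qed (use \<open>l > 0\<close> \<open>e > 0\<close> in \<open>auto simp: B_def\<close>)

lemma (in prob_space) prob_mean_obs_deviation_ge_le:
  fixes f :: "int list \<Rightarrow> (int list \<times> nat \<Rightarrow> real) \<Rightarrow> real" and p k t :: nat and L l \<epsilon> :: real
  defines "m \<equiv> (2 * k + 1) ^ p"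
  defines "s \<equiv> 1 / (4 * real (m * t))" and "B \<equiv> real (m * t) * sqrt 2"
  defines "C \<equiv> 16 * L\<^sup>2 / s\<^sup>2 * B * exp (s + B)"
  assumes "gaussian_field p N t \<Sigma> M Z" and "N \<ge> 1" "t \<ge> 1" "L > 0"
    and "\<forall>i\<in>grid p N. pseudo_lipschitz2_on (window p N k i \<times> {1..t}) L (f i)"
    and "0 < l" "l \<le> s / (4 * L)" "l \<le> \<epsilon> / (2 * real m * (C + 1))" "\<epsilon> > 0"
  shows "prob {\<omega> \<in> space M.
          \<bar>(1 / real (card (grid p N))) *
             (\<Sum>i\<in>grid p N. f i (obs p N k t Z i \<omega>) - expectation (\<lambda>\<omega>'. f i (obs p N k t Z i \<omega>')))\<bar> \<ge> \<epsilon>}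
       \<le> 2 * real m * exp (- (l / (2 * real m * \<epsilon>)) * real (card (grid p N)) * \<epsilon>\<^sup>2)"
proof -
  let ?n = "real (card (grid p N))"
  have "?n > 0"
    using grid_nonempty[of N p] finite_grid[of p N] \<open>N \<ge> 1\<close> by (simp add: card_gt_0_iff)
  have "m > 0" by (simp add: m_def)
  have "C \<ge> 0" by (simp add: C_def B_def)
  have rate: "C * l\<^sup>2 - l * \<epsilon> / m \<le> - (l / (2 * real m * \<epsilon>)) * \<epsilon>\<^sup>2"
  proof -
    have "l * (2 * real m * (C + 1)) \<le> \<epsilon>"
      using \<open>l \<le> \<epsilon> / (2 * real m * (C + 1))\<close> \<open>m > 0\<close> \<open>C \<ge> 0\<close> by (simp add: pos_le_divide_eq)
    moreover have "C * l * (2 * real m) \<le> l * (2 * real m * (C + 1))"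
      using \<open>l > 0\<close> by (simp add: algebra_simps)
    ultimately have "C * l \<le> \<epsilon> / (2 * real m)"
      using \<open>m > 0\<close> by (simp add: pos_le_divide_eq)
    then have "l * (C * l) \<le> l * (\<epsilon> / (2 * real m))"
      using \<open>l > 0\<close> by (intro mult_left_mono) auto
    then show ?thesis
      using \<open>\<epsilon> > 0\<close> by (simp add: power2_eq_square field_simps)
  qed
  have "prob {\<omega> \<in> space M.
          \<bar>(1 / ?n) * (\<Sum>i\<in>grid p N. f i (obs p N k t Z i \<omega>)
                 - expectation (\<lambda>\<omega>'. f i (obs p N k t Z i \<omega>')))\<bar> \<ge> \<epsilon>}
        = prob {\<omega> \<in> space M. ?n * \<epsilon> \<le>
             \<bar>\<Sum>i\<in>grid p N. f i (obs p N k t Z i \<omega>) - expectation (\<lambda>\<omega>'. f i (obs p N k t Z i \<omega>'))\<bar>}"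
    using \<open>?n > 0\<close> by (simp add: abs_mult field_simps)
  also have "\<dots> \<le> 2 * real m * exp (?n * (C * l\<^sup>2 - l * \<epsilon> / m))"
    unfolding C_def s_def B_def m_def using assms
    by (intro prob_abs_sum_obs_ge_le) (auto simp: s_def m_def)
  also have "\<dots> \<le> 2 * real m * exp (- (l / (2 * real m * \<epsilon>)) * ?n * \<epsilon>\<^sup>2)"
    using mult_left_mono[OF rate, of ?n] \<open>?n > 0\<close> by (intro mult_left_mono) (auto simp: mult_ac)
  finally show ?thesis .
qed

theorem lemmaC4:
  fixes p k t :: nat and \<Sigma> :: "nat \<Rightarrow> nat \<Rightarrow> real" and L \<epsilon> :: real
  assumes "p \<in> {1, 2, 3}" and "t \<ge> 1" and "L > 0"
    and "0 < \<epsilon>" and "\<epsilon> < 1"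
  shows "\<exists>K \<kappa>::real. K > 0 \<and> \<kappa> > 0 \<and>
    (\<forall>(N::nat) (M::'a measure) Z (f :: int list \<Rightarrow> (int list \<times> nat \<Rightarrow> real) \<Rightarrow> real).
       2 * k + 1 \<le> N \<and> prob_space M \<and> gaussian_field p N t \<Sigma> M Z \<and>
       (\<forall>i\<in>grid p N. pseudo_lipschitz2_on (window p N k i \<times> {1..t}) L (f i)) \<longrightarrow>
       measure M {\<omega> \<in> space M.
          \<bar>(1 / real (card (grid p N))) *
             (\<Sum>i\<in>grid p N. f i (obs p N k t Z i \<omega>)
                 - prob_space.expectation M (\<lambda>\<omega>'. f i (obs p N k t Z i \<omega>')))\<bar> \<ge> \<epsilon>}
       \<le> K * exp (- \<kappa> * real (card (grid p N)) * \<epsilon>\<^sup>2))"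
proof -
  define m :: nat where "m = (2 * k + 1) ^ p"
  define s where "s = 1 / (4 * real (m * t))"
  define B where "B = real (m * t) * sqrt 2"
  define C where "C = 16 * L\<^sup>2 / s\<^sup>2 * B * exp (s + B)"
  define l where "l = min (s / (4 * L)) (\<epsilon> / (2 * real m * (C + 1)))"
  have "m \<ge> 1" by (simp add: m_def)
  have "C \<ge> 0" by (simp add: C_def B_def)
  have "l > 0"
    using \<open>m \<ge> 1\<close> \<open>t \<ge> 1\<close> \<open>L > 0\<close> \<open>\<epsilon> > 0\<close> \<open>C \<ge> 0\<close> by (simp add: l_def s_def)
  note deviation = prob_space.prob_mean_obs_deviation_ge_le[of M p N t \<Sigma> Z L k f l \<epsilon> for M N Z f,
      folded m_def, folded s_def B_def, folded C_def]
  show ?thesis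
  proof (rule exI[of _ "2 * real m"], rule exI[of _ "l / (2 * real m * \<epsilon>)"], intro conjI allI impI)
    show "2 * real m > 0" "l / (2 * real m * \<epsilon>) > 0"
      using \<open>m \<ge> 1\<close> \<open>l > 0\<close> \<open>\<epsilon> > 0\<close> by auto
  next
    fix N M Z f
    assume "2 * k + 1 \<le> N \<and> prob_space M \<and> gaussian_field p N t \<Sigma> M Z \<and>
      (\<forall>i\<in>grid p N. pseudo_lipschitz2_on (window p N k i \<times> {1..t}) L (f i))"
    then show "measure M {\<omega> \<in> space M. \<bar>(1 / real (card (grid p N))) *
             (\<Sum>i\<in>grid p N. f i (obs p N k t Z i \<omega>)
                 - prob_space.expectation M (\<lambda>\<omega>'. f i (obs p N k t Z i \<omega>')))\<bar> \<ge> \<epsilon>}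
       \<le> 2 * real m * exp (- (l / (2 * real m * \<epsilon>)) * real (card (grid p N)) * \<epsilon>\<^sup>2)"
      using \<open>t \<ge> 1\<close> \<open>L > 0\<close> \<open>l > 0\<close> \<open>\<epsilon> > 0\<close> by (intro deviation) (auto simp: l_def)
  qed
qed

end
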